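(* Let $r_n$ ($n\ge 0$) denote the parity of the number of runs of $1$'s in the binary representation of $n$, and for $k\ge 0$ let $R_k$ denote the finite word $r_0r_1\cdots r_{2^k-1}$ consisting of the first $2^k$ terms. Then $R_1=01$, and for every $k\ge 1$ we have the concatenation $R_{k+1}=R_kS_k$, where $S_k$ is the word obtained from $R_k$ by replacing each of its first $2^{k-1}$ letters $x$ by $1-x$ and leaving the remaining $2^{k-1}$ letters unchanged.
   Context: A run of $1$'s in the binary representation of $n$ is a maximal block of consecutive binary digits equal to $1$; parity means the number modulo $2$, so $r_n\in\{0,1\}$. *)

theory Defs
  imports Main
begin

definition bdigit :: "nat \<Rightarrow> nat \<Rightarrow> nat" where
  "bdigit n i = n div 2 ^ i mod 2"

(* number of maximal blocks of 1's in the binary representation of n: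
   count positions i where a block starts (reading from least significant end),
   i.e. digit i is 1 and the next less significant digit is 0 (or absent).
   Only positions i < n + 1 can carry a 1 digit. *)
definition num_runs :: "nat \<Rightarrow> nat" where
  "num_runs n = card {i. i \<le> n \<and> bdigit n i = 1 \<and> (i = 0 \<or> bdigit n (i - 1) = 0)}"

definition r :: "nat \<Rightarrow> nat" where
  "r n = num_runs n mod 2"

definition RR :: "nat \<Rightarrow> nat list" where
  "RR k = map r [0..<2 ^ k]"

definition SS :: "nat \<Rightarrow> nat list" where
  "SS k = map (\<lambda>x. 1 - x) (take (2 ^ (k - 1)) (RR k)) @ drop (2 ^ (k - 1)) (RR k)"

end

theory Submission
  imports Defs
begin

text \<open>For \<open>n < 2^k\<close> the binary expansion of \<open>2^k + n\<close> is that of \<open>n\<close> with an extra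
  leading digit \<open>1\<close> in position \<open>k\<close>. This digit starts a new run of \<open>1\<close>'s exactly when
  digit \<open>k - 1\<close> of \<open>n\<close> is \<open>0\<close>, i.e. when \<open>n < 2^(k-1)\<close>; otherwise it only lengthens the
  top run of \<open>n\<close>. Hence \<open>r (2^k + n)\<close> is \<open>1 - r n\<close> on the first half of \<open>[0, 2^k)\<close> and
  \<open>r n\<close> on the second, which is the recursion \<open>R\<^sub>k\<^sub>+\<^sub>1 = R\<^sub>k S\<^sub>k\<close>.\<close>

lemma bdigit_eq_0_if_less_power: "n < 2 ^ i \<Longrightarrow> bdigit n i = 0"
  by (simp add: bdigit_def)

lemma bdigit_eq_1_imp_le: "bdigit n i = 1 \<Longrightarrow> i \<le> n"
  by (metis bdigit_eq_0_if_less_power less_exp not_le order.strict_trans zero_neq_one)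

lemma bdigit_power_add:
  assumes "n < 2 ^ k"
  shows "bdigit (2 ^ k + n) i = (if i < k then bdigit n i else if i = k then 1 else 0)"
proof -
  consider "i < k" | "i = k" | "k < i" by linarith
  then show ?thesis
  proof cases
    case 1
    then obtain j where "k = Suc (i + j)" using less_imp_Suc_add by blast
    then have "(2::nat) ^ k = 2 ^ i * (2 * 2 ^ j)" by (simp add: power_add)
    then have "(2 ^ k + n) div 2 ^ i = 2 * 2 ^ j + n div 2 ^ i" by simp
    with 1 show ?thesis unfolding bdigit_def by (simp only: mod_mult_self4 if_True)
  next
    case 2
    have "(2 ^ k + n) div 2 ^ k = n div 2 ^ k + 1" by (rule div_add_self1) simp
    with 2 assms show ?thesis unfolding bdigit_def by simp
  next
    case 3
    then have "(2::nat) ^ Suc k \<le> 2 ^ i" by (intro power_increasing) auto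
    with assms have "2 ^ k + n < 2 ^ i" by simp
    with 3 show ?thesis by (simp add: bdigit_eq_0_if_less_power)
  qed
qed


definition run_starts :: "nat \<Rightarrow> nat set" where
  "run_starts n = {i. bdigit n i = 1 \<and> (i = 0 \<or> bdigit n (i - 1) = 0)}"

lemma num_runs_eq_card_run_starts: "num_runs n = card (run_starts n)"
  unfolding num_runs_def run_starts_def using bdigit_eq_1_imp_le by metis

lemma run_starts_subset_lessThan:
  assumes "n < 2 ^ k"
  shows "run_starts n \<subseteq> {..<k}"
proof
  fix i
  assume "i \<in> run_starts n"
  then have "\<not> n < 2 ^ i" using bdigit_eq_0_if_less_power unfolding run_starts_def by force
  with assms have "(2::nat) ^ i < 2 ^ k" by linarith
  then show "i \<in> {..<k}" using power_strict_increasing_iff[of "2::nat"] by simp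
qed

lemma run_starts_power_add:
  assumes "n < 2 ^ k" "k \<ge> 1"
  shows "run_starts (2 ^ k + n) = run_starts n \<union> (if bdigit n (k - 1) = 0 then {k} else {})"
proof -
  have "run_starts (2 ^ k + n) = run_starts n \<inter> {..<k} \<union> (if bdigit n (k - 1) = 0 then {k} else {})"
    using assms unfolding run_starts_def bdigit_power_add[OF assms(1)]
    by (auto split: if_splits)
  with run_starts_subset_lessThan[OF assms(1)] show ?thesis by auto
qed

lemma bdigit_pred_eq_0_iff:
  assumes "n < 2 ^ k" "k \<ge> 1"
  shows "bdigit n (k - 1) = 0 \<longleftrightarrow> n < 2 ^ (k - 1)"
proof -
  from assms have "n div 2 ^ (k - 1) < 2"
    by (cases k) (auto simp: div_less_iff_less_mult)
  then show ?thesis unfolding bdigit_def by (auto simp: div_eq_0_iff)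
qed

lemma r_power_add:
  assumes "n < 2 ^ k" "k \<ge> 1"
  shows "r (2 ^ k + n) = (if n < 2 ^ (k - 1) then 1 - r n else r n)"
proof -
  have "finite (run_starts n)" and "k \<notin> run_starts n"
    using run_starts_subset_lessThan[OF assms(1)] finite_subset by auto
  moreover have "Suc c mod 2 = 1 - c mod 2" for c :: nat by presburger
  ultimately show ?thesis
    unfolding r_def num_runs_eq_card_run_starts run_starts_power_add[OF assms]
    using bdigit_pred_eq_0_iff[OF assms] by auto
qed

lemma RR_Suc: "RR (Suc k) = RR k @ map (\<lambda>n. r (2 ^ k + n)) [0..<2 ^ k]"
proof -
  have "[0..<2 ^ Suc k] = [0..<2 ^ k] @ [2 ^ k..<2 ^ k + 2 ^ k]"
    using upt_add_eq_append[of 0 "2 ^ k" "2 ^ k"] by (simp add: mult_2)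
  also have "[2 ^ k..<2 ^ k + 2 ^ k] = map (\<lambda>n. n + 2 ^ k) [0..<2 ^ k]"
    by (rule map_add_upt[symmetric])
  finally show ?thesis unfolding RR_def by (simp add: add.commute)
qed

lemma run_starts_1: "run_starts 1 = {0}"
proof -
  have "bdigit 1 i = (if i = 0 then 1 else 0)" for i
  proof (cases i)
    case (Suc j)
    then have "(1::nat) < 2 ^ i" by (intro one_less_power) simp_all
    with Suc show ?thesis using bdigit_eq_0_if_less_power[of 1 i] by simp
  qed (simp add: bdigit_def)
  then show ?thesis unfolding run_starts_def by auto
qed

theorem theorem2:
  shows "RR 1 = [0, 1] \<and> (\<forall>k\<ge>1. RR (k + 1) = RR k @ SS k)"
proof (intro conjI allI impI)
  have "run_starts 0 = {}" unfolding run_starts_def bdigit_def by simp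
  then have "r 0 = 0" and "r 1 = 1"
    unfolding r_def num_runs_eq_card_run_starts run_starts_1 by simp_all
  then show "RR 1 = [0, 1]" by (simp add: RR_def upt_rec)
next
  fix k :: nat
  assume k: "k \<ge> 1"
  have half: "(2::nat) ^ (k - 1) < 2 ^ k" using k by (intro power_strict_increasing) auto
  have "map (\<lambda>n. r (2 ^ k + n)) [0..<2 ^ k] = SS k"
  proof (rule nth_equalityI)
    show "length (map (\<lambda>n. r (2 ^ k + n)) [0..<2 ^ k]) = length (SS k)"
      using half by (simp add: SS_def RR_def)
  next
    fix i assume "i < length (map (\<lambda>n. r (2 ^ k + n)) [0..<2 ^ k])"
    then have "i < 2 ^ k" by simp
    with half show "map (\<lambda>n. r (2 ^ k + n)) [0..<2 ^ k] ! i = SS k ! i"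
      using r_power_add[OF _ k] unfolding SS_def RR_def by (auto simp: nth_append min_def)
  qed
  then show "RR (k + 1) = RR k @ SS k" by (simp add: RR_Suc)
qed
end
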